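(* Let $\mathcal V\subseteq B(H)$ be a concrete operator system (a unital self-adjoint subspace) and suppose $p\in\mathcal V$ is a projection in $B(H)$. Then the abstract compression $(\mathcal V/J_p,\{\widetilde C(p_n)\}_n,p+J_p)$ is completely order isomorphic to the concrete compression operator system $p\mathcal V p\subseteq B(pH)$ (with unit $p$).
   Context: Here $\mathcal V$ carries the matrix order inherited from $B(H)$ with unit $I$; $p_n=I_n\otimes p$. Define $C(p_n)=\{x\in M_n(\mathcal V): x=x^*,\ \forall\epsilon>0\ \exists t>0 \text{ with } x+\epsilon p_n+t(I_n\otimes I-p_n)\ge 0 \text{ in } B(H^n)\}$, $J_p=\operatorname{span}(C(p)\cap -C(p))$, and $\widetilde C(p_n)=\{(x_{ij}+J_p)\in M_n(\mathcal V/J_p):(x_{ij})\in C(p_n)\}$. *)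

theory Defs
  imports Complex_Main
begin

(* A complex Hilbert space on the carrier type 'h: complex scalar multiplication sc,
   inner product ip (linear in the first, conjugate-linear in the second argument). *)
definition hnorm :: "('h \<Rightarrow> 'h \<Rightarrow> complex) \<Rightarrow> 'h \<Rightarrow> real" where
  "hnorm ip x = sqrt (Re (ip x x))"

definition complex_hilbert :: "(complex \<Rightarrow> 'h::ab_group_add \<Rightarrow> 'h) \<Rightarrow> ('h \<Rightarrow> 'h \<Rightarrow> complex) \<Rightarrow> bool" where
  "complex_hilbert sc ip \<longleftrightarrow>
     (\<forall>x. sc 1 x = x) \<and> (\<forall>a b x. sc a (sc b x) = sc (a * b) x) \<and>
     (\<forall>a x y. sc a (x + y) = sc a x + sc a y) \<and> (\<forall>a b x. sc (a + b) x = sc a x + sc b x) \<and>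
     (\<forall>x y z. ip (x + y) z = ip x z + ip y z) \<and> (\<forall>a x y. ip (sc a x) y = a * ip x y) \<and>
     (\<forall>x y. ip y x = cnj (ip x y)) \<and> (\<forall>x. ip x x \<in> \<real> \<and> Re (ip x x) \<ge> 0) \<and>
     (\<forall>x. ip x x = 0 \<longrightarrow> x = 0) \<and>
     (\<forall>X::nat \<Rightarrow> 'h. (\<forall>e>0. \<exists>N. \<forall>m\<ge>N. \<forall>n\<ge>N. hnorm ip (X m - X n) < e) \<longrightarrow>
        (\<exists>L. \<forall>e>0. \<exists>N. \<forall>n\<ge>N. hnorm ip (X n - L) < e))"

definition bounded_op :: "(complex \<Rightarrow> 'h::ab_group_add \<Rightarrow> 'h) \<Rightarrow> ('h \<Rightarrow> 'h \<Rightarrow> complex) \<Rightarrow> ('h \<Rightarrow> 'h) \<Rightarrow> bool" where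
  "bounded_op sc ip T \<longleftrightarrow> (\<forall>x y. T (x + y) = T x + T y) \<and> (\<forall>a x. T (sc a x) = sc a (T x)) \<and>
     (\<exists>K. \<forall>x. hnorm ip (T x) \<le> K * hnorm ip x)"

definition adj :: "('h \<Rightarrow> 'h \<Rightarrow> complex) \<Rightarrow> ('h \<Rightarrow> 'h) \<Rightarrow> ('h \<Rightarrow> 'h)" where
  "adj ip T = (SOME S. \<forall>x y. ip (T x) y = ip x (S y))"

definition is_projection :: "(complex \<Rightarrow> 'h::ab_group_add \<Rightarrow> 'h) \<Rightarrow> ('h \<Rightarrow> 'h \<Rightarrow> complex) \<Rightarrow> ('h \<Rightarrow> 'h) \<Rightarrow> bool" where
  "is_projection sc ip p \<longleftrightarrow> bounded_op sc ip p \<and> p \<circ> p = p \<and> adj ip p = p"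

definition operator_system :: "(complex \<Rightarrow> 'h::ab_group_add \<Rightarrow> 'h) \<Rightarrow> ('h \<Rightarrow> 'h \<Rightarrow> complex) \<Rightarrow> ('h \<Rightarrow> 'h) set \<Rightarrow> bool" where
  "operator_system sc ip V \<longleftrightarrow> (\<forall>T\<in>V. bounded_op sc ip T) \<and> id \<in> V \<and>
     (\<forall>x\<in>V. \<forall>y\<in>V. (\<lambda>h. x h + y h) \<in> V) \<and> (\<forall>a. \<forall>x\<in>V. (\<lambda>h. sc a (x h)) \<in> V) \<and>
     (\<forall>x\<in>V. adj ip x \<in> V)"

(* positivity of an n x n operator matrix M = (M i j) in B(H^n) *)
definition mat_pos :: "('h::comm_monoid_add \<Rightarrow> 'h \<Rightarrow> complex) \<Rightarrow> nat \<Rightarrow> (nat \<Rightarrow> nat \<Rightarrow> 'h \<Rightarrow> 'h) \<Rightarrow> bool" where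
  "mat_pos ip n M \<longleftrightarrow> (\<forall>h::nat \<Rightarrow> 'h. (\<Sum>i<n. \<Sum>j<n. ip (M i j (h j)) (h i)) \<in> \<real> \<and>
                                       Re (\<Sum>i<n. \<Sum>j<n. ip (M i j (h j)) (h i)) \<ge> 0)"

definition inCp :: "(complex \<Rightarrow> 'h::ab_group_add \<Rightarrow> 'h) \<Rightarrow> ('h \<Rightarrow> 'h \<Rightarrow> complex) \<Rightarrow> ('h \<Rightarrow> 'h) set \<Rightarrow> ('h \<Rightarrow> 'h)
     \<Rightarrow> nat \<Rightarrow> (nat \<Rightarrow> nat \<Rightarrow> 'h \<Rightarrow> 'h) \<Rightarrow> bool" where
  "inCp sc ip V p n x \<longleftrightarrow> (\<forall>i<n. \<forall>j<n. x i j \<in> V) \<and> (\<forall>i<n. \<forall>j<n. x j i = adj ip (x i j)) \<and>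
     (\<forall>\<epsilon>::real>0. \<exists>t::real>0. mat_pos ip n
        (\<lambda>i j h. x i j h + (if i = j then sc (complex_of_real \<epsilon>) (p h) + sc (complex_of_real t) (h - p h) else 0)))"

definition Cp1 :: "(complex \<Rightarrow> 'h::ab_group_add \<Rightarrow> 'h) \<Rightarrow> ('h \<Rightarrow> 'h \<Rightarrow> complex) \<Rightarrow> ('h \<Rightarrow> 'h) set \<Rightarrow> ('h \<Rightarrow> 'h) \<Rightarrow> ('h \<Rightarrow> 'h) set" where
  "Cp1 sc ip V p = {a. inCp sc ip V p 1 (\<lambda>_ _. a)}"

definition cspan :: "(complex \<Rightarrow> 'h::ab_group_add \<Rightarrow> 'h) \<Rightarrow> ('h \<Rightarrow> 'h) set \<Rightarrow> ('h \<Rightarrow> 'h) set" where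
  "cspan sc S = {T. \<exists>(m::nat) c x. (\<forall>k<m. x k \<in> S) \<and> T = (\<lambda>h. \<Sum>k<m. sc (c k) (x k h))}"

definition Jp :: "(complex \<Rightarrow> 'h::ab_group_add \<Rightarrow> 'h) \<Rightarrow> ('h \<Rightarrow> 'h \<Rightarrow> complex) \<Rightarrow> ('h \<Rightarrow> 'h) set \<Rightarrow> ('h \<Rightarrow> 'h) \<Rightarrow> ('h \<Rightarrow> 'h) set" where
  "Jp sc ip V p = cspan sc (Cp1 sc ip V p \<inter> {a. (\<lambda>h. - a h) \<in> Cp1 sc ip V p})"

definition coset :: "('h::ab_group_add \<Rightarrow> 'h) set \<Rightarrow> ('h \<Rightarrow> 'h) \<Rightarrow> ('h \<Rightarrow> 'h) set" where
  "coset J x = {(\<lambda>h. x h + j h) | j. j \<in> J}"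

definition quot :: "('h::ab_group_add \<Rightarrow> 'h) set \<Rightarrow> ('h \<Rightarrow> 'h) set \<Rightarrow> ('h \<Rightarrow> 'h) set set" where
  "quot V J = coset J ` V"

definition inCtilde :: "(complex \<Rightarrow> 'h::ab_group_add \<Rightarrow> 'h) \<Rightarrow> ('h \<Rightarrow> 'h \<Rightarrow> complex) \<Rightarrow> ('h \<Rightarrow> 'h) set \<Rightarrow> ('h \<Rightarrow> 'h)
     \<Rightarrow> nat \<Rightarrow> (nat \<Rightarrow> nat \<Rightarrow> ('h \<Rightarrow> 'h) set) \<Rightarrow> bool" where
  "inCtilde sc ip V p n Y \<longleftrightarrow> (\<exists>x. inCp sc ip V p n x \<and>
      (\<forall>i<n. \<forall>j<n. Y i j = coset (Jp sc ip V p) (x i j)))"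

(* positivity in M_n(B(pH)) of a matrix of compressions (operators on H of the form p y p),
   tested on vectors of (pH)^n *)
definition compr_pos :: "('h::comm_monoid_add \<Rightarrow> 'h \<Rightarrow> complex) \<Rightarrow> ('h \<Rightarrow> 'h) \<Rightarrow> nat \<Rightarrow> (nat \<Rightarrow> nat \<Rightarrow> 'h \<Rightarrow> 'h) \<Rightarrow> bool" where
  "compr_pos ip p n M \<longleftrightarrow> (\<forall>h::nat \<Rightarrow> 'h. (\<forall>j<n. h j \<in> range p) \<longrightarrow>
      (\<Sum>i<n. \<Sum>j<n. ip (M i j (h j)) (h i)) \<in> \<real> \<and> Re (\<Sum>i<n. \<Sum>j<n. ip (M i j (h j)) (h i)) \<ge> 0)"

end

theory Submission
  imports Defs "HOL-Library.Function_Algebras"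
begin

(*
  The compression x \<mapsto> p x p kills exactly J\<^sub>p. If a and -a both lie in C(p), then
  <p a p w, w> = 0 on pH, so p a p = 0 by polarisation; conversely a general x with p x p = 0
  is Re x + i Im x with both parts of that kind. Hence compression induces a unital linear
  bijection V/J\<^sub>p \<rightarrow> pVp. For the matrix orders, x \<in> C(p\<^sub>n) iff x is hermitian and
  p\<^sub>n x p\<^sub>n \<ge> 0: letting \<epsilon> \<rightarrow> 0 in x + \<epsilon> p\<^sub>n + t (1 - p\<^sub>n) \<ge> 0 on (pH)\<^sup>n gives one direction;
  for the other, split h = p h + (1 - p) h and bound the cross terms by AM-GM,
  c (\<delta> |p h|\<^sup>2 + |(1 - p) h|\<^sup>2 / \<delta>), which \<epsilon> and a large t absorb. A positive compressed matrix
  is hermitian, so a representative y can be replaced by the hermitian (y + y\<^sup>\<star>) / 2 with the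
  same compression. Adjoints exist by the Riesz representation theorem.
*)

lemma sesquilinear_form_hermitian:
  fixes B :: "'v::plus \<Rightarrow> 'v \<Rightarrow> complex" and i_scale :: "'v \<Rightarrow> 'v"
  assumes add_left: "\<And>u v w. B (u + v) w = B u w + B v w"
    and add_right: "\<And>u v w. B u (v + w) = B u v + B u w"
    and i_left: "\<And>u v. B (i_scale u) v = \<i> * B u v"
    and i_right: "\<And>u v. B u (i_scale v) = - \<i> * B u v"
    and real_diagonal: "\<And>u. B u u \<in> \<real>"
  shows "B u v = cnj (B v u)"
proof -
  have "B u v + B v u = B (u + v) (u + v) - B u u - B v v"
    by (simp add: add_left add_right)
  then have re: "B u v + B v u \<in> \<real>"
    by (simp add: real_diagonal)
  have "- \<i> * B u v + \<i> * B v u = B (u + i_scale v) (u + i_scale v) - B u u - B (i_scale v) (i_scale v)"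
    by (simp add: add_left add_right i_left i_right algebra_simps)
  then have im: "- \<i> * B u v + \<i> * B v u \<in> \<real>"
    by (simp add: real_diagonal)
  show ?thesis
    using re im by (auto simp: complex_eq_iff complex_is_Real_iff)
qed

lemma real_nonneg_if_small_perturbations:
  fixes F :: complex
  assumes "P \<ge> 0"
    and perturbed: "\<And>\<epsilon>. \<epsilon> > 0 \<Longrightarrow> F + of_real (\<epsilon> * P) \<in> \<real> \<and> 0 \<le> Re F + \<epsilon> * P"
  shows "F \<in> \<real> \<and> 0 \<le> Re F"
proof
  show "F \<in> \<real>"
    using perturbed[of 1] Reals_diff[of "F + of_real P" "of_real P"] by simp
  have "- Re F \<le> 0 + e" if "e > 0" for e
  proof -
    have "0 \<le> Re F + e / (P + 1) * P"
      using perturbed[of "e / (P + 1)"] \<open>e > 0\<close> \<open>P \<ge> 0\<close> by simp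
    moreover have "e / (P + 1) * P \<le> e"
      using \<open>e > 0\<close> \<open>P \<ge> 0\<close> by (simp add: field_simps)
    ultimately show ?thesis
      by linarith
  qed
  then show "0 \<le> Re F"
    using field_le_epsilon[of "- Re F" 0] by simp
qed

lemma additive_comp: "additive f \<Longrightarrow> additive g \<Longrightarrow> additive (f \<circ> g)"
  by (simp add: additive_def)

lemma coset_eq_iff:
  assumes zero: "(\<lambda>h. 0) \<in> J" and diff: "\<And>a b. a \<in> J \<Longrightarrow> b \<in> J \<Longrightarrow> (\<lambda>h. a h - b h) \<in> J"
  shows "coset J x = coset J y \<longleftrightarrow> (\<lambda>h. x h - y h) \<in> J"
proof
  assume "coset J x = coset J y"
  moreover have "x \<in> coset J x"
    using zero unfolding coset_def by force
  ultimately obtain j where "j \<in> J" and "x = (\<lambda>h. y h + j h)"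
    unfolding coset_def by blast
  then show "(\<lambda>h. x h - y h) \<in> J"
    by simp
next
  have add: "(\<lambda>h. a h + b h) \<in> J" if "a \<in> J" "b \<in> J" for a b
    using diff[OF that(1) diff[OF zero that(2)]] by simp
  have subset: "coset J x \<subseteq> coset J y" if "(\<lambda>h. x h - y h) \<in> J" for x y
  proof
    fix z
    assume "z \<in> coset J x"
    then obtain j where "j \<in> J" and "z = (\<lambda>h. x h + j h)"
      unfolding coset_def by blast
    then show "z \<in> coset J y"
      using add[OF that \<open>j \<in> J\<close>] unfolding coset_def
      by (intro CollectI exI[of _ "\<lambda>h. x h - y h + j h"] conjI) (simp_all add: algebra_simps)
  qed
  assume "(\<lambda>h. x h - y h) \<in> J"
  moreover have "(\<lambda>h. y h - x h) = (\<lambda>h. 0 - (x h - y h))"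
    by simp
  ultimately have "(\<lambda>h. y h - x h) \<in> J"
    using diff[OF zero] by metis
  with subset \<open>(\<lambda>h. x h - y h) \<in> J\<close> show "coset J x = coset J y"
    by blast
qed

definition mat_form ::
  "('a::comm_monoid_add \<Rightarrow> 'a \<Rightarrow> complex) \<Rightarrow> nat \<Rightarrow> (nat \<Rightarrow> nat \<Rightarrow> 'a \<Rightarrow> 'a) \<Rightarrow>
    (nat \<Rightarrow> 'a) \<Rightarrow> (nat \<Rightarrow> 'a) \<Rightarrow> complex"
  where "mat_form ip n M u v = (\<Sum>i<n. \<Sum>j<n. ip (M i j (u j)) (v i))"

lemma mat_pos_iff_mat_form:
  "mat_pos ip n M \<longleftrightarrow> (\<forall>h. mat_form ip n M h h \<in> \<real> \<and> 0 \<le> Re (mat_form ip n M h h))"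
  by (simp add: mat_pos_def mat_form_def)

lemma compr_pos_iff_mat_form:
  "compr_pos ip p n M \<longleftrightarrow>
     (\<forall>h. (\<forall>j<n. h j \<in> range p) \<longrightarrow> mat_form ip n M h h \<in> \<real> \<and> 0 \<le> Re (mat_form ip n M h h))"
  by (simp add: compr_pos_def mat_form_def)

lemma compr_pos_cong:
  assumes "\<And>i j. i < n \<Longrightarrow> j < n \<Longrightarrow> M i j = M' i j"
  shows "compr_pos ip p n M \<longleftrightarrow> compr_pos ip p n M'"
proof -
  have "mat_form ip n M h h = mat_form ip n M' h h" for h
    unfolding mat_form_def using assms by (intro sum.cong) auto
  then show ?thesis
    by (simp add: compr_pos_iff_mat_form)
qed

lemma compr_pos_1_iff:
  "compr_pos ip p 1 (\<lambda>_ _. T) \<longleftrightarrow> (\<forall>w. ip (T (p w)) (p w) \<in> \<real> \<and> 0 \<le> Re (ip (T (p w)) (p w)))"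
proof
  assume "compr_pos ip p 1 (\<lambda>_ _. T)"
  then show "\<forall>w. ip (T (p w)) (p w) \<in> \<real> \<and> 0 \<le> Re (ip (T (p w)) (p w))"
    unfolding compr_pos_def by (auto dest: spec[where x = "\<lambda>_. p _"])
qed (auto simp: compr_pos_def)

locale complex_hilbert_space =
  fixes sc :: "complex \<Rightarrow> 'a::ab_group_add \<Rightarrow> 'a" and ip :: "'a \<Rightarrow> 'a \<Rightarrow> complex"
  assumes complex_hilbert: "complex_hilbert sc ip"
begin

lemmas hilbert_axioms = complex_hilbert[unfolded complex_hilbert_def]

sublocale module sc
  using hilbert_axioms by unfold_locales (elim conjE; blast)+

lemma ip_add_left: "ip (x + y) z = ip x z + ip y z"
  using hilbert_axioms by (elim conjE) blast

lemma ip_sc_left: "ip (sc a x) y = a * ip x y"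
  using hilbert_axioms by (elim conjE) blast

lemma ip_commute: "ip y x = cnj (ip x y)"
  using hilbert_axioms by (elim conjE) blast

lemma ip_self_real: "ip x x \<in> \<real>"
  using hilbert_axioms by (elim conjE) blast

lemma ip_self_nonneg: "Re (ip x x) \<ge> 0"
  using hilbert_axioms by (elim conjE) blast

lemma ip_self_eq_0D: "ip x x = 0 \<Longrightarrow> x = 0"
  using hilbert_axioms by (elim conjE) blast

lemma Cauchy_imp_convergent:
  fixes X :: "nat \<Rightarrow> 'a"
  shows "\<forall>e>0. \<exists>N. \<forall>m\<ge>N. \<forall>n\<ge>N. hnorm ip (X m - X n) < e
    \<Longrightarrow> \<exists>L. \<forall>e>0. \<exists>N. \<forall>n\<ge>N. hnorm ip (X n - L) < e"
  using hilbert_axioms by blast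

lemma ip_add_right: "ip z (x + y) = ip z x + ip z y"
  by (metis ip_commute ip_add_left complex_cnj_add)

lemma ip_sc_right: "ip x (sc a y) = cnj a * ip x y"
  by (metis ip_commute ip_sc_left complex_cnj_mult)

lemma ip_zero_left [simp]: "ip 0 y = 0"
  using ip_add_left[of 0 0 y] by simp

lemma ip_zero_right [simp]: "ip y 0 = 0"
  by (metis ip_commute ip_zero_left complex_cnj_zero)

lemma ip_minus_left: "ip (- x) y = - ip x y"
  using ip_add_left[of x "- x" y] by (simp add: eq_neg_iff_add_eq_0 add.commute)

lemma ip_minus_right: "ip y (- x) = - ip y x"
  by (metis ip_commute ip_minus_left complex_cnj_minus)

lemma ip_diff_left: "ip (x - z) y = ip x y - ip z y"
  using ip_add_left[of x "- z" y] ip_minus_left by simp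

lemma ip_diff_right: "ip y (x - z) = ip y x - ip y z"
  using ip_add_right[of y x "- z"] ip_minus_right by simp

lemmas ip_simps = ip_add_left ip_add_right ip_sc_left ip_sc_right
  ip_minus_left ip_minus_right ip_diff_left ip_diff_right

lemma ip_self_eq_0_iff [simp]: "ip x x = 0 \<longleftrightarrow> x = 0"
  using ip_self_eq_0D by auto

lemma ip_self_of_real: "ip x x = of_real (Re (ip x x))"
  using ip_self_real by (metis Reals_cases Re_complex_of_real)

lemma ip_self_pos: "x \<noteq> 0 \<Longrightarrow> Re (ip x x) > 0"
  by (metis ip_self_eq_0_iff ip_self_nonneg ip_self_of_real less_eq_real_def of_real_0)

lemma ip_ext_right: "(\<And>x. ip x a = ip x b) \<Longrightarrow> a = b"
  by (metis ip_diff_right ip_self_eq_0_iff right_minus_eq)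

lemma ip_ext_left: "(\<And>x. ip a x = ip b x) \<Longrightarrow> a = b"
  by (metis ip_commute ip_ext_right)

lemma hnorm_nonneg: "hnorm ip x \<ge> 0"
  by (simp add: hnorm_def ip_self_nonneg)

lemma hnorm_square: "(hnorm ip x)\<^sup>2 = Re (ip x x)"
  by (simp add: hnorm_def ip_self_nonneg)

lemma hnorm_minus_commute: "hnorm ip (x - y) = hnorm ip (y - x)"
proof -
  have "ip (y - x) (y - x) = ip (x - y) (x - y)"
    by (metis minus_diff_eq ip_minus_left ip_minus_right minus_minus)
  then show ?thesis by (simp add: hnorm_def)
qed

lemma ip_self_sub_component:
  assumes "y \<noteq> 0"
  shows "Re (ip (x - sc (ip x y / ip y y) y) (x - sc (ip x y / ip y y) y))
           = Re (ip x x) - (cmod (ip x y))\<^sup>2 / Re (ip y y)"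
proof -
  define r where "r = Re (ip y y)"
  define c where "c = ip x y"
  have yy: "ip y y = of_real r" and "r \<noteq> 0"
    using ip_self_of_real ip_self_pos[OF assms] by (auto simp: r_def)
  have yx: "ip y x = cnj c"
    unfolding c_def by (rule ip_commute)
  have "ip (x - sc (c / r) y) (x - sc (c / r) y)
      = ip x x - cnj (c / r) * c - (c / r) * cnj c + (c / r) * cnj (c / r) * r"
    by (simp add: ip_simps yy yx c_def[symmetric] algebra_simps)
  also have "\<dots> = ip x x - c * cnj c / r"
    using \<open>r \<noteq> 0\<close> by (simp add: field_simps)
  finally show ?thesis
    by (simp add: c_def[symmetric] r_def[symmetric] yy complex_norm_square[symmetric])
qed

lemma Cauchy_Schwarz: "cmod (ip x y) \<le> hnorm ip x * hnorm ip y"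
proof (cases "y = 0")
  case False
  have "0 \<le> Re (ip x x) - (cmod (ip x y))\<^sup>2 / Re (ip y y)"
    using ip_self_sub_component[OF False, of x] ip_self_nonneg by metis
  then have "(cmod (ip x y))\<^sup>2 \<le> (hnorm ip x * hnorm ip y)\<^sup>2"
    using ip_self_pos[OF False] by (simp add: field_simps hnorm_square power_mult_distrib)
  then show ?thesis
    by (meson hnorm_nonneg mult_nonneg_nonneg power2_le_imp_le)
qed (simp add: hnorm_def)

lemma hnorm_triangle: "hnorm ip (x + y) \<le> hnorm ip x + hnorm ip y"
proof -
  have "Re (ip (x + y) (x + y)) = Re (ip x x) + Re (ip y y) + 2 * Re (ip x y)"
    using ip_commute[of y x] by (simp add: ip_add_left ip_add_right)
  also have "\<dots> \<le> (hnorm ip x + hnorm ip y)\<^sup>2"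
    using Cauchy_Schwarz[of x y] complex_Re_le_cmod[of "ip x y"]
    by (simp add: hnorm_square power2_sum)
  finally show ?thesis
    by (metis hnorm_square hnorm_nonneg add_nonneg_nonneg power2_le_imp_le)
qed

lemma parallelogram_law: "ip (u - v) (u - v) + ip (u + v) (u + v) = 2 * ip u u + 2 * ip v v"
  by (simp add: ip_simps algebra_simps)

subsection \<open>Riesz representation and adjoints\<close>

lemma minimizing_sequence_Cauchy:
  fixes X :: "nat \<Rightarrow> 'a"
  assumes midpoint: "\<And>u v. u \<in> S \<Longrightarrow> v \<in> S \<Longrightarrow> sc (1/2) (u + v) \<in> S"
    and lower: "\<And>v. v \<in> S \<Longrightarrow> d \<le> Re (ip v v)"
    and X: "\<And>k. X k \<in> S" "\<And>k. Re (ip (X k) (X k)) < d + inverse (real (Suc k))"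
  shows "\<forall>e>0. \<exists>N. \<forall>m\<ge>N. \<forall>n\<ge>N. hnorm ip (X m - X n) < e"
proof (intro allI impI)
  fix e :: real
  assume "e > 0"
  then obtain N where N: "inverse (real (Suc N)) < e\<^sup>2 / 4"
    using reals_Archimedean[of "e\<^sup>2 / 4"] by auto
  have "hnorm ip (X m - X n) < e" if "m \<ge> N" "n \<ge> N" for m n
  proof -
    have "4 * d \<le> Re (ip (X m + X n) (X m + X n))"
      using lower[OF midpoint[OF X(1) X(1)], of m n] by (simp add: ip_sc_left ip_sc_right)
    then have "Re (ip (X m - X n) (X m - X n)) \<le> 2 * Re (ip (X m) (X m)) + 2 * Re (ip (X n) (X n)) - 4 * d"
      using arg_cong[OF parallelogram_law[of "X m" "X n"], of Re] by simp
    also have "\<dots> < 2 * inverse (real (Suc m)) + 2 * inverse (real (Suc n))"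
      using X(2)[of m] X(2)[of n] by simp
    also have "\<dots> \<le> 4 * inverse (real (Suc N))"
    proof -
      have "inverse (real (Suc k)) \<le> inverse (real (Suc N))" if "k \<ge> N" for k
        using that by (intro le_imp_inverse_le) auto
      from this[OF \<open>m \<ge> N\<close>] this[OF \<open>n \<ge> N\<close>] show ?thesis
        by linarith
    qed
    also have "\<dots> < e\<^sup>2"
      using N by simp
    finally show ?thesis
      using \<open>e > 0\<close> by (simp add: hnorm_def real_less_lsqrt)
  qed
  then show "\<exists>N. \<forall>m\<ge>N. \<forall>n\<ge>N. hnorm ip (X m - X n) < e"
    by blast
qed

lemma minimizing_sequence_limit:
  fixes X :: "nat \<Rightarrow> 'a"
  assumes X: "\<And>k. Re (ip (X k) (X k)) < d + inverse (real (Suc k))" and "d \<ge> 0"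
    and lim: "\<forall>e>0. \<exists>N. \<forall>n\<ge>N. hnorm ip (X n - w) < e"
  shows "Re (ip w w) \<le> d"
proof -
  have "hnorm ip w \<le> sqrt d + e" if "e > 0" for e
  proof -
    obtain N where N: "\<forall>n\<ge>N. hnorm ip (X n - w) < e / 2"
      using lim \<open>e > 0\<close> by (meson half_gt_zero)
    obtain K where K: "inverse (real (Suc K)) < (e / 2)\<^sup>2"
      using reals_Archimedean[of "(e / 2)\<^sup>2"] \<open>e > 0\<close> by auto
    define n where "n = max N K"
    have "sqrt (inverse (real (Suc n))) \<le> sqrt (inverse (real (Suc K)))"
      by (simp add: n_def)
    also have "\<dots> < e / 2"
      using K \<open>e > 0\<close> by (intro real_less_lsqrt) auto
    finally have small: "sqrt (inverse (real (Suc n))) < e / 2" .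
    have "hnorm ip (X n) \<le> sqrt (d + inverse (real (Suc n)))"
      using X[of n] by (simp add: hnorm_def)
    also have "\<dots> \<le> sqrt d + sqrt (inverse (real (Suc n)))"
      using \<open>d \<ge> 0\<close> by (simp add: sqrt_add_le_add_sqrt)
    finally have "hnorm ip (X n) < sqrt d + e / 2"
      using small by linarith
    moreover have "hnorm ip w \<le> hnorm ip (X n) + hnorm ip (X n - w)"
      using hnorm_triangle[of "X n" "w - X n"] hnorm_minus_commute[of w "X n"] by simp
    moreover have "hnorm ip (X n - w) < e / 2"
      using N by (simp add: n_def)
    ultimately show ?thesis
      by linarith
  qed
  then have "hnorm ip w \<le> sqrt d"
    by (rule field_le_epsilon)
  then have "(hnorm ip w)\<^sup>2 \<le> d"
    using \<open>d \<ge> 0\<close> hnorm_nonneg by (metis power_mono real_sqrt_pow2)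
  then show ?thesis
    by (simp add: hnorm_square)
qed

lemma bounded_functional_limit:
  fixes X :: "nat \<Rightarrow> 'a"
  assumes "additive f" and bounded: "\<And>x. cmod (f x) \<le> C * hnorm ip x"
    and lim: "\<forall>e>0. \<exists>N. \<forall>n\<ge>N. hnorm ip (X n - w) < e" and const: "\<And>n. f (X n) = c"
  shows "f w = c"
proof -
  interpret f: additive f by fact
  have "cmod (c - f w) \<le> 0 + e" if "e > 0" for e
  proof -
    have "e / (\<bar>C\<bar> + 1) > 0"
      using \<open>e > 0\<close> by simp
    then obtain N where N: "hnorm ip (X N - w) < e / (\<bar>C\<bar> + 1)"
      using lim by blast
    have "cmod (c - f w) = cmod (f (X N - w))"
      using const[of N] by (simp add: f.diff)
    also have "\<dots> \<le> \<bar>C\<bar> * hnorm ip (X N - w)"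
      using bounded[of "X N - w"] mult_right_mono[OF abs_ge_self hnorm_nonneg, of C "X N - w"]
      by linarith
    also have "\<dots> \<le> \<bar>C\<bar> * (e / (\<bar>C\<bar> + 1))"
      using N by (intro mult_left_mono) auto
    also have "\<dots> \<le> e"
      using \<open>e > 0\<close> by (simp add: field_simps)
    finally show ?thesis by simp
  qed
  then show ?thesis
    using field_le_epsilon[of "cmod (c - f w)" 0] by simp
qed

lemma minimal_norm_in_level_set:
  assumes "additive f" and hom: "\<And>a x. f (sc a x) = a * f x"
    and bounded: "\<And>x. cmod (f x) \<le> C * hnorm ip x" and "f x1 = 1"
  obtains w where "f w = 1" and "\<And>v. f v = 1 \<Longrightarrow> Re (ip w w) \<le> Re (ip v v)"
proof -
  interpret f: additive f by fact
  define S where "S = {v. f v = 1}"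
  define d where "d = (INF v\<in>S. Re (ip v v))"
  have "S \<noteq> {}"
    using \<open>f x1 = 1\<close> by (auto simp: S_def)
  have lower: "d \<le> Re (ip v v)" if "v \<in> S" for v
    unfolding d_def using that ip_self_nonneg by (intro cINF_lower bdd_belowI2) auto
  have "d \<ge> 0"
    unfolding d_def using \<open>S \<noteq> {}\<close> ip_self_nonneg by (intro cINF_greatest) auto
  have "\<exists>v\<in>S. Re (ip v v) < d + inverse (real (Suc k))" for k
    using cInf_lessD[of "(\<lambda>v. Re (ip v v)) ` S" "d + inverse (real (Suc k))"] \<open>S \<noteq> {}\<close>
    by (auto simp: d_def)
  then obtain X where X: "\<And>k. X k \<in> S" "\<And>k. Re (ip (X k) (X k)) < d + inverse (real (Suc k))"
    by metis
  have midpoint: "sc (1/2) (u + v) \<in> S" if "u \<in> S" "v \<in> S" for u v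
    using that by (simp add: S_def hom f.add)
  obtain w where lim: "\<forall>e>0. \<exists>N. \<forall>n\<ge>N. hnorm ip (X n - w) < e"
    using Cauchy_imp_convergent[OF minimizing_sequence_Cauchy[OF midpoint lower X]] by blast
  have "f w = 1"
    using bounded_functional_limit[OF \<open>additive f\<close> bounded lim] X(1) by (simp add: S_def)
  moreover have "Re (ip w w) \<le> Re (ip v v)" if "f v = 1" for v
    using minimizing_sequence_limit[OF X(2) \<open>d \<ge> 0\<close> lim] lower[of v] that
    by (simp add: S_def)
  ultimately show thesis
    using that by blast
qed

lemma Riesz_representation:
  assumes "additive f" and hom: "\<And>a x. f (sc a x) = a * f x"
    and bounded: "\<And>x. cmod (f x) \<le> C * hnorm ip x"
  obtains z where "\<And>x. f x = ip x z"
proof (cases "\<forall>x. f x = 0")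
  case True
  then show thesis
    using that[of 0] by simp
next
  case False
  interpret f: additive f by fact
  obtain x0 where "f x0 \<noteq> 0"
    using False by blast
  then have "f (sc (1 / f x0) x0) = 1"
    by (simp add: hom)
  then obtain w where w: "f w = 1" and min: "\<And>v. f v = 1 \<Longrightarrow> Re (ip w w) \<le> Re (ip v v)"
    using minimal_norm_in_level_set[OF \<open>additive f\<close> hom bounded] by blast
  have "w \<noteq> 0"
    using w f.zero by auto
  have orth: "ip w u = 0" if "f u = 0" for u
  proof (cases "u = 0")
    case False
    have "f (w - sc (ip w u / ip u u) u) = 1"
      using w that by (simp add: f.diff hom)
    then have "Re (ip w w) \<le> Re (ip w w) - (cmod (ip w u))\<^sup>2 / Re (ip u u)"
      using min ip_self_sub_component[OF False, of w] by metis
    then have "(cmod (ip w u))\<^sup>2 \<le> 0"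
      using ip_self_pos[OF False] by (simp add: divide_le_0_iff)
    then show ?thesis
      by simp
  qed simp
  show thesis
  proof (rule that)
    fix x
    have "ip w (x - sc (f x) w) = 0"
      using w by (intro orth) (simp add: f.diff hom)
    then have "ip x w = f x * ip w w"
      using ip_commute[of "x - sc (f x) w" w] by (simp add: ip_simps)
    then show "f x = ip x (sc (cnj (1 / ip w w)) w)"
      using \<open>w \<noteq> 0\<close> by (simp add: ip_sc_right)
  qed
qed

lemma bounded_op_additive: "bounded_op sc ip T \<Longrightarrow> additive T"
  by (simp add: bounded_op_def additive_def)

lemma bounded_op_scale: "bounded_op sc ip T \<Longrightarrow> T (sc a x) = sc a (T x)"
  by (simp add: bounded_op_def)

lemma bounded_op_bound:
  assumes "bounded_op sc ip T"
  obtains K where "K \<ge> 0" and "\<And>x. hnorm ip (T x) \<le> K * hnorm ip x"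
proof -
  obtain K where K: "\<And>x. hnorm ip (T x) \<le> K * hnorm ip x"
    using assms unfolding bounded_op_def by blast
  have "hnorm ip (T x) \<le> \<bar>K\<bar> * hnorm ip x" for x
    using K[of x] mult_right_mono[OF abs_ge_self hnorm_nonneg, of K x] by linarith
  then show thesis
    by (intro that[of "\<bar>K\<bar>"]) simp_all
qed

lemma bounded_ops_common_bound:
  assumes "finite I" and "\<And>i. i \<in> I \<Longrightarrow> bounded_op sc ip (T i)"
  obtains K where "K \<ge> 0" and "\<And>i x. i \<in> I \<Longrightarrow> hnorm ip (T i x) \<le> K * hnorm ip x"
  using assms
proof (induction I arbitrary: thesis rule: finite_induct)
  case empty
  then show ?case by blast
next
  case (insert i I)
  obtain K where K: "K \<ge> 0" "\<And>j x. j \<in> I \<Longrightarrow> hnorm ip (T j x) \<le> K * hnorm ip x"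
    using insert.IH insert.prems(2) by blast
  obtain L where L: "L \<ge> 0" "\<And>x. hnorm ip (T i x) \<le> L * hnorm ip x"
    using bounded_op_bound insert.prems(2) by blast
  have "hnorm ip (T j x) \<le> max K L * hnorm ip x" if "j \<in> insert i I" for j x
  proof -
    have "K * hnorm ip x \<le> max K L * hnorm ip x" "L * hnorm ip x \<le> max K L * hnorm ip x"
      by (simp_all add: mult_right_mono hnorm_nonneg)
    then show ?thesis
      using that K(2) L(2) by (metis insertE order.trans)
  qed
  then show ?case
    using insert.prems(1)[of "max K L"] K(1) by simp
qed

lemma adj_exists:
  assumes "bounded_op sc ip T"
  shows "\<exists>S. \<forall>x y. ip (T x) y = ip x (S y)"
proof -
  interpret T: additive T
    using assms by (rule bounded_op_additive)
  obtain K where K: "\<And>x. hnorm ip (T x) \<le> K * hnorm ip x"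
    using bounded_op_bound[OF assms] by blast
  have "\<exists>z. \<forall>x. ip (T x) y = ip x z" for y
  proof -
    have "additive (\<lambda>x. ip (T x) y)"
      by unfold_locales (simp add: T.add ip_add_left)
    moreover have "ip (T (sc a x)) y = a * ip (T x) y" for a x
      using assms by (simp add: bounded_op_scale ip_sc_left)
    moreover have "cmod (ip (T x) y) \<le> (K * hnorm ip y) * hnorm ip x" for x
      using Cauchy_Schwarz[of "T x" y] mult_right_mono[OF K hnorm_nonneg, of x y]
      by (simp add: algebra_simps)
    ultimately obtain z where "\<And>x. ip (T x) y = ip x z"
      by (rule Riesz_representation) blast
    then show ?thesis
      by blast
  qed
  then obtain S where "\<And>y. \<forall>x. ip (T x) y = ip x (S y)"
    using choice[of "\<lambda>y z. \<forall>x. ip (T x) y = ip x z"] by blast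
  then show ?thesis
    by blast
qed

lemma adj_eqI:
  assumes "\<And>x y. ip (T x) y = ip x (S y)"
  shows "adj ip T = S"
proof -
  have "\<forall>x y. ip (T x) y = ip x (adj ip T y)"
    unfolding adj_def by (rule someI[of _ S]) (use assms in blast)
  then have "adj ip T y = S y" for y
    using assms by (intro ip_ext_right) metis
  then show ?thesis
    by (rule ext)
qed

lemma ip_adj_right:
  assumes "bounded_op sc ip T"
  shows "ip (T x) y = ip x (adj ip T y)"
proof -
  obtain S where S: "\<forall>x y. ip (T x) y = ip x (S y)"
    using adj_exists[OF assms] by blast
  then have "adj ip T = S"
    by (intro adj_eqI) blast
  with S show ?thesis
    by simp
qed

lemma ip_adj_left: "bounded_op sc ip T \<Longrightarrow> ip (adj ip T x) y = ip x (T y)"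
  using ip_adj_right[of T y x] ip_commute by (metis complex_cnj_cnj)

lemma eq_0_if_ip_self_eq_0:
  assumes "additive S" and hom: "\<And>a x. S (sc a x) = sc a (S x)" and zero: "\<And>x. ip (S x) x = 0"
  shows "S u = 0"
proof -
  interpret S: additive S by fact
  \<comment> \<open>Both the form \<open>(u, v) \<mapsto> ip (S u) v\<close> and its multiple by \<open>\<i>\<close> are hermitian,
    so it vanishes.\<close>
  have hermitian: "c * ip (S u) v = cnj (c * ip (S v) u)" if "c \<in> {1, \<i>}" for c v
    using that by (intro sesquilinear_form_hermitian[where i_scale = "sc \<i>"])
      (auto simp: S.add hom ip_simps zero algebra_simps)
  have "ip (S u) v = 0" for v
    using hermitian[of 1 v] hermitian[of \<i> v] by simp
  then show ?thesis
    using ip_self_eq_0D by blast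
qed

lemma mat_form_add_left:
  assumes "\<And>i j. i < n \<Longrightarrow> j < n \<Longrightarrow> additive (M i j)"
  shows "mat_form ip n M (u + u') v = mat_form ip n M u v + mat_form ip n M u' v"
  using assms by (simp add: mat_form_def additive.add ip_add_left sum.distrib)

lemma mat_form_add_right: "mat_form ip n M u (v + v') = mat_form ip n M u v + mat_form ip n M u v'"
  by (simp add: mat_form_def ip_add_right sum.distrib)

lemma mat_form_scale_left:
  assumes "\<And>i j x. i < n \<Longrightarrow> j < n \<Longrightarrow> M i j (sc a x) = sc a (M i j x)"
  shows "mat_form ip n M (\<lambda>j. sc a (u j)) v = a * mat_form ip n M u v"
  using assms by (simp add: mat_form_def ip_sc_left sum_distrib_left)

lemma mat_form_scale_right: "mat_form ip n M u (\<lambda>i. sc a (v i)) = cnj a * mat_form ip n M u v"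
  by (simp add: mat_form_def ip_sc_right sum_distrib_left)

lemma mat_form_unit_vectors:
  assumes "k < n" "l < n" and "\<And>i j. i < n \<Longrightarrow> j < n \<Longrightarrow> M i j 0 = 0"
  shows "mat_form ip n M (\<lambda>j. if j = l then u else 0) (\<lambda>i. if i = k then v else 0) = ip (M k l u) v"
proof -
  have "ip (M i j (if j = l then u else 0)) (if i = k then v else 0)
      = (if i = k then if j = l then ip (M i j u) v else 0 else 0)" if "i < n" "j < n" for i j
    using assms(3)[OF that] by auto
  then have "mat_form ip n M (\<lambda>j. if j = l then u else 0) (\<lambda>i. if i = k then v else 0)
      = (\<Sum>i<n. \<Sum>j<n. if i = k then if j = l then ip (M i j u) v else 0 else 0)"
    unfolding mat_form_def by (intro sum.cong refl) auto
  also have "\<dots> = ip (M k l u) v"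
    using assms(1,2) by (simp add: sum.If_cases)
  finally show ?thesis .
qed

lemma mat_form_self_real:
  assumes "\<And>i j u v. i < n \<Longrightarrow> j < n \<Longrightarrow> ip (M i j u) v = ip u (M j i v)"
  shows "mat_form ip n M h h \<in> \<real>"
proof -
  have "cnj (mat_form ip n M h h) = (\<Sum>i<n. \<Sum>j<n. ip (h i) (M i j (h j)))"
    unfolding mat_form_def by (simp add: ip_commute[of "h _"])
  also have "\<dots> = (\<Sum>i<n. \<Sum>j<n. ip (M j i (h i)) (h j))"
    using assms by (intro sum.cong refl) simp
  also have "\<dots> = mat_form ip n M h h"
    unfolding mat_form_def by (rule sum.swap)
  finally show ?thesis
    using Reals_cnj_iff by blast
qed

lemma mat_form_bound:
  assumes bound: "\<And>i j x. i < n \<Longrightarrow> j < n \<Longrightarrow> hnorm ip (M i j x) \<le> K * hnorm ip x"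
    and "K \<ge> 0" "\<delta> > 0"
  shows "cmod (mat_form ip n M u v)
           \<le> K * n * (\<delta> * (\<Sum>i<n. Re (ip (v i) (v i))) + (\<Sum>j<n. Re (ip (u j) (u j))) / \<delta>) / 2"
proof -
  have AM_GM: "a * b \<le> (\<delta> * b\<^sup>2 + a\<^sup>2 / \<delta>) / 2" for a b :: real
  proof -
    have "0 \<le> (\<delta> * b - a)\<^sup>2 / \<delta>"
      using \<open>\<delta> > 0\<close> by simp
    then show ?thesis
      using \<open>\<delta> > 0\<close> by (simp add: power2_eq_square field_simps)
  qed
  have entry: "cmod (ip (M i j (u j)) (v i)) \<le> K * ((\<delta> * Re (ip (v i) (v i)) + Re (ip (u j) (u j)) / \<delta>) / 2)"
    if "i < n" "j < n" for i j
  proof -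
    have "cmod (ip (M i j (u j)) (v i)) \<le> K * hnorm ip (u j) * hnorm ip (v i)"
      using Cauchy_Schwarz[of "M i j (u j)" "v i"] bound[OF that, of "u j"]
      by (meson hnorm_nonneg mult_right_mono order_trans)
    also have "\<dots> \<le> K * ((\<delta> * (hnorm ip (v i))\<^sup>2 + (hnorm ip (u j))\<^sup>2 / \<delta>) / 2)"
      using AM_GM \<open>K \<ge> 0\<close> by (simp add: mult.assoc mult_left_mono)
    finally show ?thesis
      by (simp add: hnorm_square)
  qed
  have "cmod (mat_form ip n M u v) \<le> (\<Sum>i<n. \<Sum>j<n. cmod (ip (M i j (u j)) (v i)))"
    unfolding mat_form_def by (rule order_trans[OF norm_sum sum_mono[OF norm_sum]])
  also have "\<dots> \<le> (\<Sum>i<n. \<Sum>j<n. K * ((\<delta> * Re (ip (v i) (v i)) + Re (ip (u j) (u j)) / \<delta>) / 2))"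
    using entry by (intro sum_mono) auto
  also have "\<dots> = K * n * (\<delta> * (\<Sum>i<n. Re (ip (v i) (v i))) + (\<Sum>j<n. Re (ip (u j) (u j))) / \<delta>) / 2"
    by (simp add: sum.distrib sum_distrib_left sum_divide_distrib[symmetric] algebra_simps)
  finally show ?thesis .
qed

end

section \<open>Compressions by a projection\<close>

locale hilbert_projection = complex_hilbert_space +
  fixes p
  assumes projection: "is_projection sc ip p"
begin

lemma p_bounded: "bounded_op sc ip p"
  using projection by (simp add: is_projection_def)

sublocale p: additive p
  using p_bounded by (rule bounded_op_additive)

lemma p_scale: "p (sc a x) = sc a (p x)"
  using p_bounded by (rule bounded_op_scale)

lemma p_idem [simp]: "p (p x) = p x"
  using projection by (metis comp_apply is_projection_def)

lemma p_selfadjoint: "ip (p x) y = ip x (p y)"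
  using ip_adj_right[OF p_bounded] projection by (simp add: is_projection_def)

lemma ip_p_left: "ip (p x) y = ip (p x) (p y)"
  by (metis p_selfadjoint p_idem)

lemma ip_complement_p: "ip (x - p x) (p y) = 0"
  by (simp add: p_selfadjoint[symmetric] p.diff)

definition shifted ::
    "(nat \<Rightarrow> nat \<Rightarrow> 'a \<Rightarrow> 'a) \<Rightarrow> real \<Rightarrow> real \<Rightarrow> nat \<Rightarrow> nat \<Rightarrow> 'a \<Rightarrow> 'a"
  where "shifted x \<epsilon> t =
    (\<lambda>i j h. x i j h + (if i = j then sc (of_real \<epsilon>) (p h) + sc (of_real t) (h - p h) else 0))"

lemma ip_shift_self:
  "ip (sc (of_real \<epsilon>) (p y) + sc (of_real t) (y - p y)) y
     = of_real (\<epsilon> * Re (ip (p y) (p y)) + t * Re (ip (y - p y) (y - p y)))"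
proof -
  have "ip (p y) y = of_real (Re (ip (p y) (p y)))"
    using ip_p_left ip_self_of_real by metis
  moreover have "ip (y - p y) y = of_real (Re (ip (y - p y) (y - p y)))"
    using ip_complement_p[of y y] ip_self_of_real[of "y - p y"] by (simp add: ip_diff_right)
  ultimately show ?thesis
    by (simp add: ip_add_left ip_sc_left)
qed

lemma mat_form_shifted:
  "mat_form ip n (shifted x \<epsilon> t) h h = mat_form ip n x h h +
     of_real (\<epsilon> * (\<Sum>i<n. Re (ip (p (h i)) (p (h i)))) + t * (\<Sum>i<n. Re (ip (h i - p (h i)) (h i - p (h i)))))"
proof -
  have "mat_form ip n (shifted x \<epsilon> t) h h = mat_form ip n x h h +
      (\<Sum>i<n. \<Sum>j<n. if i = j then ip (sc (of_real \<epsilon>) (p (h j)) + sc (of_real t) (h j - p (h j))) (h i) else 0)"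
    by (simp add: mat_form_def shifted_def ip_add_left sum.distrib if_distrib[of "\<lambda>z. ip z _"] cong: if_cong)
  also have "\<dots> = mat_form ip n x h h +
      (\<Sum>i<n. of_real (\<epsilon> * Re (ip (p (h i)) (p (h i))) + t * Re (ip (h i - p (h i)) (h i - p (h i)))))"
    by (simp add: ip_shift_self)
  finally show ?thesis
    by (simp add: sum.distrib sum_distrib_left)
qed

lemma compr_pos_if_shifted_pos:
  assumes shifted_pos: "\<And>\<epsilon>. \<epsilon> > 0 \<Longrightarrow> \<exists>t. mat_pos ip n (shifted x \<epsilon> t)"
  shows "compr_pos ip p n (\<lambda>i j. p \<circ> x i j \<circ> p)"
  unfolding compr_pos_iff_mat_form
proof (intro allI impI)
  fix h :: "nat \<Rightarrow> 'a"
  assume "\<forall>j<n. h j \<in> range p"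
  then have ph: "p (h j) = h j" if "j < n" for j
    using that by auto
  define P where "P = (\<Sum>i<n. Re (ip (h i) (h i)))"
  have "mat_form ip n x h h \<in> \<real> \<and> 0 \<le> Re (mat_form ip n x h h)"
  proof (rule real_nonneg_if_small_perturbations)
    show "P \<ge> 0"
      unfolding P_def by (simp add: ip_self_nonneg sum_nonneg)
    fix \<epsilon> :: real
    assume "\<epsilon> > 0"
    then obtain t where "mat_pos ip n (shifted x \<epsilon> t)"
      using shifted_pos by blast
    then have "mat_form ip n (shifted x \<epsilon> t) h h \<in> \<real> \<and> 0 \<le> Re (mat_form ip n (shifted x \<epsilon> t) h h)"
      by (simp add: mat_pos_iff_mat_form)
    moreover have "(\<Sum>i<n. Re (ip (p (h i)) (p (h i)))) = P"
      "(\<Sum>i<n. Re (ip (h i - p (h i)) (h i - p (h i)))) = 0"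
      by (simp_all add: P_def ph)
    ultimately show "mat_form ip n x h h + of_real (\<epsilon> * P) \<in> \<real> \<and> 0 \<le> Re (mat_form ip n x h h) + \<epsilon> * P"
      by (simp only: mat_form_shifted) simp
  qed
  moreover have "mat_form ip n (\<lambda>i j. p \<circ> x i j \<circ> p) h h = mat_form ip n x h h"
    unfolding mat_form_def by (intro sum.cong refl) (simp add: ph p_selfadjoint)
  ultimately show "mat_form ip n (\<lambda>i j. p \<circ> x i j \<circ> p) h h \<in> \<real> \<and>
      0 \<le> Re (mat_form ip n (\<lambda>i j. p \<circ> x i j \<circ> p) h h)"
    by simp
qed

lemma Re_mat_form_lower_bound:
  fixes h :: "nat \<Rightarrow> 'a"
  assumes additive: "\<And>i j. i < n \<Longrightarrow> j < n \<Longrightarrow> additive (x i j)"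
    and bound: "\<And>i j u. i < n \<Longrightarrow> j < n \<Longrightarrow> hnorm ip (x i j u) \<le> K * hnorm ip u" and "K \<ge> 0"
    and compr: "compr_pos ip p n (\<lambda>i j. p \<circ> x i j \<circ> p)" and "\<delta> > 0"
  defines "P \<equiv> \<Sum>i<n. Re (ip (p (h i)) (p (h i)))"
    and "Q \<equiv> \<Sum>i<n. Re (ip (h i - p (h i)) (h i - p (h i)))"
  shows "Re (mat_form ip n x h h) \<ge> - (K * n * (\<delta> * P + Q / \<delta> + Q))"
proof -
  define a where "a j = p (h j)" for j
  define b where "b j = h j - p (h j)" for j
  let ?G = "mat_form ip n x"
  have "h = a + b"
    by (simp add: a_def b_def fun_eq_iff)
  then have split: "?G h h = ?G a a + ?G b a + ?G a b + ?G b b"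
    by (simp add: mat_form_add_left[OF additive] mat_form_add_right)
  have "?G a a = mat_form ip n (\<lambda>i j. p \<circ> x i j \<circ> p) a a"
    unfolding mat_form_def a_def by (intro sum.cong refl) (simp add: p_selfadjoint)
  then have aa: "Re (?G a a) \<ge> 0"
    using compr by (simp add: compr_pos_iff_mat_form a_def)
  have bound_form: "cmod (?G u v)
      \<le> K * n * (d * (\<Sum>i<n. Re (ip (v i) (v i))) + (\<Sum>j<n. Re (ip (u j) (u j))) / d) / 2"
    if "d > 0" for u v d
    by (rule mat_form_bound) (use bound \<open>K \<ge> 0\<close> that in auto)
  have ba: "cmod (?G b a) \<le> K * n * (\<delta> * P + Q / \<delta>) / 2"
    using bound_form[OF \<open>\<delta> > 0\<close>, of b a] by (simp add: P_def Q_def a_def b_def)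
  have ab: "cmod (?G a b) \<le> K * n * ((1 / \<delta>) * Q + P / (1 / \<delta>)) / 2"
    using bound_form[of "1 / \<delta>" a b] \<open>\<delta> > 0\<close> by (simp add: P_def Q_def a_def b_def)
  have bb: "cmod (?G b b) \<le> K * n * (1 * Q + Q / 1) / 2"
    using bound_form[of 1 b b] by (simp add: Q_def b_def)
  have Re_ge: "- cmod z \<le> Re z" for z
    using abs_Re_le_cmod[of z] by linarith
  have "Re (?G h h) = Re (?G a a) + Re (?G b a) + Re (?G a b) + Re (?G b b)"
    using split by simp
  then have "- (K * n * (\<delta> * P + Q / \<delta>) / 2 + K * n * ((1 / \<delta>) * Q + P / (1 / \<delta>)) / 2
      + K * n * (1 * Q + Q / 1) / 2) \<le> Re (?G h h)"
    using aa ba ab bb Re_ge[of "?G b a"] Re_ge[of "?G a b"] Re_ge[of "?G b b"] by linarith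
  moreover have "K * n * (\<delta> * P + Q / \<delta>) / 2 + K * n * ((1 / \<delta>) * Q + P / (1 / \<delta>)) / 2
      + K * n * (1 * Q + Q / 1) / 2 = K * n * (\<delta> * P + Q / \<delta> + Q)"
    by (simp add: field_simps)
  ultimately show ?thesis
    by simp
qed

lemma shifted_pos_if_compr_pos:
  assumes bounded: "\<And>i j. i < n \<Longrightarrow> j < n \<Longrightarrow> bounded_op sc ip (x i j)"
    and hermitian: "\<And>i j u v. i < n \<Longrightarrow> j < n \<Longrightarrow> ip (x i j u) v = ip u (x j i v)"
    and compr: "compr_pos ip p n (\<lambda>i j. p \<circ> x i j \<circ> p)" and "\<epsilon> > 0"
  shows "\<exists>t>0. mat_pos ip n (shifted x \<epsilon> t)"
proof -
  obtain K where "K \<ge> 0"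
    and K: "\<And>ij u. ij \<in> {..<n} \<times> {..<n} \<Longrightarrow> hnorm ip (x (fst ij) (snd ij) u) \<le> K * hnorm ip u"
    by (rule bounded_ops_common_bound[of "{..<n} \<times> {..<n}" "\<lambda>ij. x (fst ij) (snd ij)"])
      (use bounded in auto)
  define c where "c = K * n"
  \<comment> \<open>\<open>c * \<delta> \<le> \<epsilon>\<close> absorbs the cross terms on \<open>pH\<close>, and \<open>t\<close> absorbs them on
    the complement.\<close>
  define \<delta> where "\<delta> = \<epsilon> / (c + 1)"
  define t where "t = c / \<delta> + c + 1"
  have "c \<ge> 0"
    using \<open>K \<ge> 0\<close> by (simp add: c_def)
  then have "\<delta> > 0" and "c * \<delta> \<le> \<epsilon>"
    using \<open>\<epsilon> > 0\<close> by (simp_all add: \<delta>_def field_simps)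
  then have "t > 0"
    using \<open>c \<ge> 0\<close> unfolding t_def by (simp add: add_nonneg_pos)
  have "mat_pos ip n (shifted x \<epsilon> t)"
    unfolding mat_pos_iff_mat_form
  proof
    fix h :: "nat \<Rightarrow> 'a"
    define P where "P = (\<Sum>i<n. Re (ip (p (h i)) (p (h i))))"
    define Q where "Q = (\<Sum>i<n. Re (ip (h i - p (h i)) (h i - p (h i))))"
    have "P \<ge> 0" "Q \<ge> 0"
      by (simp_all add: P_def Q_def ip_self_nonneg sum_nonneg)
    have "Re (mat_form ip n x h h) \<ge> - (c * (\<delta> * P + Q / \<delta> + Q))"
      unfolding c_def P_def Q_def using bounded_op_additive bounded K \<open>K \<ge> 0\<close> compr \<open>\<delta> > 0\<close>
      by (intro Re_mat_form_lower_bound) fastforce+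
    moreover have "\<epsilon> * P + t * Q - c * (\<delta> * P + Q / \<delta> + Q) = (\<epsilon> - c * \<delta>) * P + Q"
      using \<open>\<delta> > 0\<close> by (simp add: t_def field_simps)
    ultimately have "0 \<le> Re (mat_form ip n x h h) + (\<epsilon> * P + t * Q)"
      using \<open>c * \<delta> \<le> \<epsilon>\<close> \<open>P \<ge> 0\<close> \<open>Q \<ge> 0\<close> mult_nonneg_nonneg[of "\<epsilon> - c * \<delta>" P] by linarith
    moreover have "mat_form ip n x h h \<in> \<real>"
      using hermitian by (rule mat_form_self_real)
    ultimately show "mat_form ip n (shifted x \<epsilon> t) h h \<in> \<real> \<and> 0 \<le> Re (mat_form ip n (shifted x \<epsilon> t) h h)"
      by (simp add: mat_form_shifted P_def[symmetric] Q_def[symmetric] del: of_real_add of_real_mult)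
  qed
  with \<open>t > 0\<close> show ?thesis
    by blast
qed

lemma compr_pos_hermitian:
  assumes bounded: "\<And>i j. i < n \<Longrightarrow> j < n \<Longrightarrow> bounded_op sc ip (y i j)"
    and compr: "compr_pos ip p n (\<lambda>i j. p \<circ> y i j \<circ> p)" and "k < n" "l < n"
  shows "ip (p (y k l (p u))) v = ip u (p (y l k (p v)))"
proof -
  let ?M = "\<lambda>i j. p \<circ> y i j \<circ> p"
  define B where "B g g' = mat_form ip n ?M (\<lambda>j. p (g j)) (\<lambda>i. p (g' i))" for g g' :: "nat \<Rightarrow> 'a"
  have additive: "additive (?M i j)" if "i < n" "j < n" for i j
    using bounded_op_additive[OF bounded[OF that]] p.additive_axioms by (simp add: additive_comp)
  have scale: "?M i j (sc a w) = sc a (?M i j w)" if "i < n" "j < n" for i j a w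
    using bounded_op_scale[OF bounded[OF that]] by (simp add: p_scale)
  have "B g g' = cnj (B g' g)" for g g'
  proof (rule sesquilinear_form_hermitian[where B = B and i_scale = "\<lambda>g j. sc \<i> (g j)"])
    show "B (g + g') w = B g w + B g' w" for g g' w
      using mat_form_add_left[where M = ?M, OF additive] by (simp add: B_def p.add plus_fun_def)
    show "B w (g + g') = B w g + B w g'" for g g' w
      using mat_form_add_right by (simp add: B_def p.add plus_fun_def)
    show "B (\<lambda>j. sc \<i> (g j)) g' = \<i> * B g g'" for g g'
      using mat_form_scale_left[where M = ?M, OF scale] by (simp add: B_def p_scale)
    show "B g (\<lambda>j. sc \<i> (g' j)) = - \<i> * B g g'" for g g'
      by (simp add: B_def p_scale mat_form_scale_right)
    show "B g g \<in> \<real>" for g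
      using compr by (simp add: B_def compr_pos_iff_mat_form)
  qed
  from this[of "\<lambda>j. if j = l then u else 0" "\<lambda>i. if i = k then v else 0"]
  have "ip (?M k l (p u)) (p v) = cnj (ip (?M l k (p v)) (p u))"
    using mat_form_unit_vectors[of k n l ?M] mat_form_unit_vectors[of l n k ?M] \<open>k < n\<close> \<open>l < n\<close>
      additive.zero[OF additive]
    by (simp add: B_def if_distrib[of p] p.zero cong: if_cong)
  then show ?thesis
    by (metis ip_commute ip_p_left p_idem p_selfadjoint comp_apply)
qed

end

section \<open>Compression on the quotient by J_p\<close>

locale operator_system_projection = hilbert_projection +
  fixes V
  assumes operator_system: "operator_system sc ip V" and p_in_V: "p \<in> V"
begin

lemma V_bounded: "x \<in> V \<Longrightarrow> bounded_op sc ip x"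
  using operator_system by (simp add: operator_system_def)

lemma V_add: "x \<in> V \<Longrightarrow> y \<in> V \<Longrightarrow> (\<lambda>h. x h + y h) \<in> V"
  using operator_system by (simp add: operator_system_def)

lemma V_scale: "x \<in> V \<Longrightarrow> (\<lambda>h. sc a (x h)) \<in> V"
  using operator_system by (simp add: operator_system_def)

lemma V_adj: "x \<in> V \<Longrightarrow> adj ip x \<in> V"
  using operator_system by (simp add: operator_system_def)

lemma V_lincomb: "x \<in> V \<Longrightarrow> y \<in> V \<Longrightarrow> (\<lambda>h. sc a (x h) + sc b (y h)) \<in> V"
  using V_add[OF V_scale V_scale] .

lemma V_diff: "x \<in> V \<Longrightarrow> y \<in> V \<Longrightarrow> (\<lambda>h. x h - y h) \<in> V"
  using V_lincomb[of x y 1 "- 1"] by simp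

lemma V_zero: "(\<lambda>h. 0) \<in> V"
  using V_diff[OF p_in_V p_in_V] by simp

lemma V_sum:
  fixes m :: nat
  shows "(\<And>k. k < m \<Longrightarrow> x k \<in> V) \<Longrightarrow> (\<lambda>h. \<Sum>k<m. sc (c k) (x k h)) \<in> V"
  by (induction m) (simp_all add: V_zero V_add V_scale)

lemma inCp_iff:
  "inCp sc ip V p n x \<longleftrightarrow>
     (\<forall>i<n. \<forall>j<n. x i j \<in> V) \<and> (\<forall>i<n. \<forall>j<n. \<forall>u v. ip (x i j u) v = ip u (x j i v)) \<and>
     compr_pos ip p n (\<lambda>i j. p \<circ> x i j \<circ> p)"
    (is "_ \<longleftrightarrow> ?in_V \<and> ?hermitian \<and> ?compr")
proof -
  have adj_iff: "x j i = adj ip (x i j) \<longleftrightarrow> (\<forall>u v. ip (x i j u) v = ip u (x j i v))"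
    if "x i j \<in> V" for i j
  proof
    assume "x j i = adj ip (x i j)"
    then show "\<forall>u v. ip (x i j u) v = ip u (x j i v)"
      using ip_adj_right[OF V_bounded[OF that]] by simp
  next
    assume "\<forall>u v. ip (x i j u) v = ip u (x j i v)"
    then show "x j i = adj ip (x i j)"
      by (intro adj_eqI[symmetric]) blast
  qed
  have "inCp sc ip V p n x \<longleftrightarrow>
     ?in_V \<and> (\<forall>i<n. \<forall>j<n. x j i = adj ip (x i j)) \<and> (\<forall>\<epsilon>>0. \<exists>t>0. mat_pos ip n (shifted x \<epsilon> t))"
    by (simp add: inCp_def shifted_def)
  also have "\<dots> \<longleftrightarrow> ?in_V \<and> ?hermitian \<and> (\<forall>\<epsilon>>0. \<exists>t>0. mat_pos ip n (shifted x \<epsilon> t))"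
    by (rule conj_cong[OF refl]) (simp add: adj_iff)
  also have "\<dots> \<longleftrightarrow> ?in_V \<and> ?hermitian \<and> ?compr"
  proof (intro conj_cong refl iffI allI impI)
    assume shifted_pos: "\<forall>\<epsilon>>0. \<exists>t>0. mat_pos ip n (shifted x \<epsilon> t)"
    show ?compr
      by (rule compr_pos_if_shifted_pos) (use shifted_pos in blast)
  next
    fix \<epsilon> :: real
    assume ?in_V ?hermitian ?compr "\<epsilon> > 0"
    then show "\<exists>t>0. mat_pos ip n (shifted x \<epsilon> t)"
      by (intro shifted_pos_if_compr_pos V_bounded) auto
  qed
  finally show ?thesis .
qed

lemma Cp1_iff:
  "a \<in> Cp1 sc ip V p \<longleftrightarrow> a \<in> V \<and> (\<forall>u v. ip (a u) v = ip u (a v)) \<and>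
     (\<forall>w. ip (p (a (p w))) (p w) \<in> \<real> \<and> 0 \<le> Re (ip (p (a (p w))) (p w)))"
proof -
  have "compr_pos ip p 1 (\<lambda>i j. p \<circ> a \<circ> p) \<longleftrightarrow>
      (\<forall>w. ip (p (a (p w))) (p w) \<in> \<real> \<and> 0 \<le> Re (ip (p (a (p w))) (p w)))"
    using compr_pos_1_iff[of ip p "p \<circ> a \<circ> p"] by simp
  then show ?thesis
    by (simp add: Cp1_def inCp_iff)
qed

lemma Cp1_and_neg_iff:
  "a \<in> Cp1 sc ip V p \<and> (\<lambda>h. - a h) \<in> Cp1 sc ip V p \<longleftrightarrow>
     a \<in> V \<and> (\<forall>u v. ip (a u) v = ip u (a v)) \<and> (\<forall>h. p (a (p h)) = 0)"
proof
  assume a: "a \<in> Cp1 sc ip V p \<and> (\<lambda>h. - a h) \<in> Cp1 sc ip V p"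
  then have "a \<in> V"
    by (simp add: Cp1_iff)
  have zero_form: "ip (p (a (p w))) (p w) = 0" for w
  proof -
    have "Re (ip (p (a (p w))) (p w)) \<ge> 0" "Re (- ip (p (a (p w))) (p w)) \<ge> 0"
      and "ip (p (a (p w))) (p w) \<in> \<real>"
      using a by (simp_all add: Cp1_iff p.minus ip_minus_left)
    then show ?thesis
      by (auto simp: complex_eq_iff complex_is_Real_iff)
  qed
  have "(p \<circ> a \<circ> p) h = 0" for h
  proof (rule eq_0_if_ip_self_eq_0[where S = "p \<circ> a \<circ> p"])
    show "additive (p \<circ> a \<circ> p)"
      using bounded_op_additive[OF V_bounded[OF \<open>a \<in> V\<close>]] p.additive_axioms
      by (simp add: additive_comp)
    show "(p \<circ> a \<circ> p) (sc c u) = sc c ((p \<circ> a \<circ> p) u)" for c u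
      using bounded_op_scale[OF V_bounded[OF \<open>a \<in> V\<close>]] by (simp add: p_scale)
    show "ip ((p \<circ> a \<circ> p) u) u = 0" for u
      using zero_form[of u] ip_p_left[of "a (p u)" u] by simp
  qed
  then show "a \<in> V \<and> (\<forall>u v. ip (a u) v = ip u (a v)) \<and> (\<forall>h. p (a (p h)) = 0)"
    using a by (simp add: Cp1_iff)
next
  assume "a \<in> V \<and> (\<forall>u v. ip (a u) v = ip u (a v)) \<and> (\<forall>h. p (a (p h)) = 0)"
  moreover have "(\<lambda>h. - a h) = (\<lambda>h. 0 - a h)"
    by simp
  ultimately show "a \<in> Cp1 sc ip V p \<and> (\<lambda>h. - a h) \<in> Cp1 sc ip V p"
    using V_diff[OF V_zero, of a] by (simp add: Cp1_iff ip_minus_left ip_minus_right p.minus)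
qed

lemma adj_compression_eq_0:
  assumes "x \<in> V" and "\<And>h. p (x (p h)) = 0"
  shows "p (adj ip x (p h)) = 0"
proof -
  have "ip (p (adj ip x (p h))) v = ip h (p (x (p v)))" for v
    using ip_adj_left[OF V_bounded[OF \<open>x \<in> V\<close>]] by (simp add: p_selfadjoint)
  then have "ip (p (adj ip x (p h))) (p (adj ip x (p h))) = 0"
    using assms(2) by simp
  then show ?thesis
    by (rule ip_self_eq_0D)
qed

lemma compression_kernel_subset_Jp:
  assumes "x \<in> V" and kernel: "\<And>h. p (x (p h)) = 0"
  shows "x \<in> Jp sc ip V p"
proof -
  let ?x' = "adj ip x"
  have "?x' \<in> V"
    using \<open>x \<in> V\<close> by (rule V_adj)
  have adj1: "ip (x u) v = ip u (?x' v)" and adj2: "ip (?x' u) v = ip u (x v)" for u v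
    using ip_adj_right ip_adj_left V_bounded[OF \<open>x \<in> V\<close>] by blast+
  define r where "r = (\<lambda>h. sc (1/2) (x h) + sc (1/2) (?x' h))"
  define s where "s = (\<lambda>h. sc (- \<i>/2) (x h) + sc (\<i>/2) (?x' h))"
  have "r \<in> V" "s \<in> V"
    unfolding r_def s_def using V_lincomb[OF \<open>x \<in> V\<close> \<open>?x' \<in> V\<close>] by blast+
  moreover have "ip (r u) v = ip u (r v)" "ip (s u) v = ip u (s v)" for u v
    unfolding r_def s_def by (simp_all add: ip_simps adj1 adj2 algebra_simps)
  moreover have "p (r (p h)) = 0" "p (s (p h)) = 0" for h
    unfolding r_def s_def using kernel adj_compression_eq_0[OF \<open>x \<in> V\<close> kernel]
    by (simp_all add: p.add p.diff p_scale)
  ultimately have parts: "r \<in> Cp1 sc ip V p \<and> (\<lambda>h. - r h) \<in> Cp1 sc ip V p"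
      "s \<in> Cp1 sc ip V p \<and> (\<lambda>h. - s h) \<in> Cp1 sc ip V p"
    by (simp_all add: Cp1_and_neg_iff)
  have i_s: "sc \<i> (s h) = sc (1/2) (x h) - sc (1/2) (?x' h)" for h
    by (simp add: s_def scale_right_distrib scale_right_diff_distrib)
  define c :: "nat \<Rightarrow> complex" where "c k = (if k = 0 then 1 else \<i>)" for k
  define y where "y k = (if k = 0 then r else s)" for k :: nat
  have "(\<Sum>k<2. sc (c k) (y k h)) = sc (1/2) (x h) + sc (1/2) (x h)" for h
    by (simp add: numeral_2_eq_2 c_def y_def r_def i_s)
  also have "sc (1/2) (x h) + sc (1/2) (x h) = x h" for h
    using scale_left_distrib[of "1/2" "1/2" "x h"] by simp
  finally have "x = (\<lambda>h. \<Sum>k<2. sc (c k) (y k h))"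
    by (simp add: fun_eq_iff)
  moreover have "\<forall>k<2. y k \<in> Cp1 sc ip V p \<inter> {a. (\<lambda>h. - a h) \<in> Cp1 sc ip V p}"
    using parts by (simp add: y_def)
  ultimately show ?thesis
    unfolding Jp_def cspan_def by blast
qed

lemma Jp_eq: "Jp sc ip V p = {x \<in> V. \<forall>h. p (x (p h)) = 0}"
proof
  show "Jp sc ip V p \<subseteq> {x \<in> V. \<forall>h. p (x (p h)) = 0}"
  proof
    fix x
    assume "x \<in> Jp sc ip V p"
    then obtain m c y where y: "\<And>k. k < m \<Longrightarrow> y k \<in> Cp1 sc ip V p \<and> (\<lambda>h. - y k h) \<in> Cp1 sc ip V p"
      and x: "x = (\<lambda>h. \<Sum>k<(m::nat). sc (c k) (y k h))"
      unfolding Jp_def cspan_def by blast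
    then have "x \<in> V"
      using V_sum Cp1_and_neg_iff by blast
    moreover have "p (x (p h)) = 0" for h
      using y Cp1_and_neg_iff by (simp add: x p.sum p_scale)
    ultimately show "x \<in> {x \<in> V. \<forall>h. p (x (p h)) = 0}"
      by blast
  qed
  show "{x \<in> V. \<forall>h. p (x (p h)) = 0} \<subseteq> Jp sc ip V p"
    using compression_kernel_subset_Jp by blast
qed

lemma coset_Jp_eq_iff:
  assumes "x \<in> V" "y \<in> V"
  shows "coset (Jp sc ip V p) x = coset (Jp sc ip V p) y \<longleftrightarrow> (\<forall>h. p (x (p h)) = p (y (p h)))"
proof -
  have "coset (Jp sc ip V p) x = coset (Jp sc ip V p) y \<longleftrightarrow> (\<lambda>h. x h - y h) \<in> Jp sc ip V p"
    by (rule coset_eq_iff) (simp_all add: Jp_eq V_zero V_diff p.zero p.diff)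
  then show ?thesis
    using assms by (simp add: Jp_eq V_diff p.diff)
qed

definition compression :: "('a \<Rightarrow> 'a) set \<Rightarrow> 'a \<Rightarrow> 'a"
  where "compression C = p \<circ> (SOME x. x \<in> V \<and> C = coset (Jp sc ip V p) x) \<circ> p"

lemma compression_coset:
  assumes "x \<in> V"
  shows "compression (coset (Jp sc ip V p) x) = p \<circ> x \<circ> p"
proof -
  define y where "y = (SOME y. y \<in> V \<and> coset (Jp sc ip V p) x = coset (Jp sc ip V p) y)"
  have "y \<in> V \<and> coset (Jp sc ip V p) x = coset (Jp sc ip V p) y"
    unfolding y_def by (rule someI[of _ x]) (simp add: assms)
  then have "p (x (p h)) = p (y (p h))" for h
    using coset_Jp_eq_iff[OF assms] by blast
  moreover have "compression (coset (Jp sc ip V p) x) = p \<circ> y \<circ> p"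
    by (simp add: compression_def y_def)
  ultimately show ?thesis
    by (simp add: fun_eq_iff)
qed

lemma bij_betw_compression: "bij_betw compression (quot V (Jp sc ip V p)) ((\<lambda>x. p \<circ> x \<circ> p) ` V)"
proof (rule bij_betw_imageI)
  show "inj_on compression (quot V (Jp sc ip V p))"
  proof (rule inj_onI)
    fix C C'
    assume "C \<in> quot V (Jp sc ip V p)" "C' \<in> quot V (Jp sc ip V p)" "compression C = compression C'"
    then obtain x y where "x \<in> V" "y \<in> V" "C = coset (Jp sc ip V p) x" "C' = coset (Jp sc ip V p) y"
      and "p \<circ> x \<circ> p = p \<circ> y \<circ> p"
      unfolding quot_def by (auto simp: compression_coset)
    then show "C = C'"
      by (simp add: coset_Jp_eq_iff fun_eq_iff)
  qed
  show "compression ` quot V (Jp sc ip V p) = (\<lambda>x. p \<circ> x \<circ> p) ` V"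
    unfolding quot_def image_image by (simp add: compression_coset cong: image_cong)
qed

lemma compression_linear:
  assumes "x \<in> V" "y \<in> V"
  shows "compression (coset (Jp sc ip V p) (\<lambda>h. sc a (x h) + y h)) =
    (\<lambda>h. sc a (compression (coset (Jp sc ip V p) x) h) + compression (coset (Jp sc ip V p) y) h)"
proof -
  have "(\<lambda>h. sc a (x h) + y h) \<in> V"
    using V_add[OF V_scale[OF \<open>x \<in> V\<close>] \<open>y \<in> V\<close>] .
  then show ?thesis
    using assms by (simp add: compression_coset p.add p_scale fun_eq_iff)
qed

lemma compression_unit: "compression (coset (Jp sc ip V p) p) = p"
  by (simp add: compression_coset[OF p_in_V] fun_eq_iff)

lemma hermitian_representative:
  assumes y: "\<And>i j. i < n \<Longrightarrow> j < n \<Longrightarrow> y i j \<in> V"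
    and compr: "compr_pos ip p n (\<lambda>i j. p \<circ> y i j \<circ> p)"
  obtains x where "\<And>i j. i < n \<Longrightarrow> j < n \<Longrightarrow> x i j \<in> V"
    and "\<And>i j u v. i < n \<Longrightarrow> j < n \<Longrightarrow> ip (x i j u) v = ip u (x j i v)"
    and "\<And>i j. i < n \<Longrightarrow> j < n \<Longrightarrow> p \<circ> x i j \<circ> p = p \<circ> y i j \<circ> p"
proof -
  define x where "x i j = (\<lambda>h. sc (1/2) (y i j h) + sc (1/2) (adj ip (y j i) h))" for i j
  have "x i j \<in> V" if "i < n" "j < n" for i j
    unfolding x_def using that by (intro V_lincomb y V_adj)
  moreover have "ip (x i j u) v = ip u (x j i v)" if "i < n" "j < n" for i j u v
    unfolding x_def using V_bounded[OF y] that
    by (simp add: ip_simps ip_adj_right ip_adj_left algebra_simps)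
  moreover have "p \<circ> x i j \<circ> p = p \<circ> y i j \<circ> p" if ij: "i < n" "j < n" for i j
  proof -
    have "p (adj ip (y j i) (p h)) = p (y i j (p h))" for h
    proof (rule ip_ext_left)
      fix v
      have "ip (p (adj ip (y j i) (p h))) v = ip h (p (y j i (p v)))"
        using ij V_bounded[OF y] by (simp add: p_selfadjoint ip_adj_left)
      also have "\<dots> = ip (p (y i j (p h))) v"
        using compr_pos_hermitian[OF V_bounded[OF y] compr ij] by simp
      finally show "ip (p (adj ip (y j i) (p h))) v = ip (p (y i j (p h))) v" .
    qed
    then show ?thesis
      using scale_left_distrib[of "1/2" "1/2"] by (simp add: x_def fun_eq_iff p.add p_scale)
  qed
  ultimately show thesis
    by (rule that)
qed

lemma inCtilde_iff_compr_pos: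
  assumes "\<forall>i<n. \<forall>j<n. Y i j \<in> quot V (Jp sc ip V p)"
  shows "inCtilde sc ip V p n Y \<longleftrightarrow> compr_pos ip p n (\<lambda>i j. compression (Y i j))"
proof
  assume "inCtilde sc ip V p n Y"
  then obtain x where x: "inCp sc ip V p n x" and Y: "\<forall>i<n. \<forall>j<n. Y i j = coset (Jp sc ip V p) (x i j)"
    unfolding inCtilde_def by blast
  have "compression (Y i j) = p \<circ> x i j \<circ> p" if "i < n" "j < n" for i j
    using x Y that by (simp add: inCp_iff compression_coset)
  then show "compr_pos ip p n (\<lambda>i j. compression (Y i j))"
    using x by (simp add: inCp_iff cong: compr_pos_cong)
next
  assume compr: "compr_pos ip p n (\<lambda>i j. compression (Y i j))"
  define y where "y i j = (SOME z. z \<in> V \<and> Y i j = coset (Jp sc ip V p) z)" for i j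
  have y: "y i j \<in> V" "Y i j = coset (Jp sc ip V p) (y i j)" if "i < n" "j < n" for i j
    using someI_ex[of "\<lambda>z. z \<in> V \<and> Y i j = coset (Jp sc ip V p) z"] assms that
    unfolding y_def quot_def by blast+
  have compr_y: "compr_pos ip p n (\<lambda>i j. p \<circ> y i j \<circ> p)"
    using compr y by (simp add: compression_coset cong: compr_pos_cong)
  obtain x where xV: "\<And>i j. i < n \<Longrightarrow> j < n \<Longrightarrow> x i j \<in> V"
    and hermitian: "\<And>i j u v. i < n \<Longrightarrow> j < n \<Longrightarrow> ip (x i j u) v = ip u (x j i v)"
    and pxp: "\<And>i j. i < n \<Longrightarrow> j < n \<Longrightarrow> p \<circ> x i j \<circ> p = p \<circ> y i j \<circ> p"
    using hermitian_representative[OF y(1) compr_y] by blast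
  have "compr_pos ip p n (\<lambda>i j. p \<circ> x i j \<circ> p)"
    using compr_y by (simp add: pxp cong: compr_pos_cong)
  then have "inCp sc ip V p n x"
    by (simp add: inCp_iff xV hermitian)
  moreover have "Y i j = coset (Jp sc ip V p) (x i j)" if "i < n" "j < n" for i j
    using y[OF that] xV[OF that] pxp[OF that] by (simp add: coset_Jp_eq_iff fun_eq_iff)
  ultimately show "inCtilde sc ip V p n Y"
    unfolding inCtilde_def by blast
qed

end

theorem corollary4p10:
  fixes sc :: "complex \<Rightarrow> 'h::ab_group_add \<Rightarrow> 'h"
    and ip :: "'h \<Rightarrow> 'h \<Rightarrow> complex"
    and V :: "('h \<Rightarrow> 'h) set"
    and p :: "'h \<Rightarrow> 'h"
  assumes "complex_hilbert sc ip"
    and "operator_system sc ip V"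
    and "p \<in> V"
    and "is_projection sc ip p"
  shows "\<exists>\<Phi> :: ('h \<Rightarrow> 'h) set \<Rightarrow> ('h \<Rightarrow> 'h).
     bij_betw \<Phi> (quot V (Jp sc ip V p)) ((\<lambda>x. p \<circ> x \<circ> p) ` V) \<and>
     (\<forall>a. \<forall>x\<in>V. \<forall>y\<in>V. \<Phi> (coset (Jp sc ip V p) (\<lambda>h. sc a (x h) + y h)) =
          (\<lambda>h. sc a (\<Phi> (coset (Jp sc ip V p) x) h) + \<Phi> (coset (Jp sc ip V p) y) h)) \<and>
     \<Phi> (coset (Jp sc ip V p) p) = p \<and>
     (\<forall>n\<ge>1. \<forall>Y. (\<forall>i<n. \<forall>j<n. Y i j \<in> quot V (Jp sc ip V p)) \<longrightarrow>
        (inCtilde sc ip V p n Y \<longleftrightarrow> compr_pos ip p n (\<lambda>i j. \<Phi> (Y i j))))"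
proof -
  interpret operator_system_projection sc ip p V
    by unfold_locales (simp_all add: assms)
  show ?thesis
  proof (intro exI[of _ compression] conjI allI ballI impI)
    show "bij_betw compression (quot V (Jp sc ip V p)) ((\<lambda>x. p \<circ> x \<circ> p) ` V)"
      by (rule bij_betw_compression)
    show "compression (coset (Jp sc ip V p) p) = p"
      by (rule compression_unit)
  qed (simp_all add: compression_linear inCtilde_iff_compr_pos)
qed

end
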